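(* For every $k\in\mathbb{N}$, every $v\in V^X$ and every $i\in\Pi$: if $\sup\{\mathrm{Cost}_i(\rho)\mid\rho\in\Lambda^k(v)\}=+\infty$, then there exists a play $\rho\in\Lambda^k(v)$ with $\mathrm{Cost}_i(\rho)=+\infty$.
   Context: Let $\mathcal{G}$ be a quantitative reachability game on an arena $G=(\Pi,V,(V_i)_{i\in\Pi},E)$ (finite player set $\Pi$, finite vertex set $V$ with $|V|\ge2$, $|\Pi|\le|V|$, partition $(V_i)$, every vertex has a successor) with targets $F_i\subseteq V$ and costs $\mathrm{Cost}_i(\rho)=$ least $k$ with $\rho_k\in F_i$ (or $+\infty$); let $v_0\in V$. Extended game: arena $X$ with vertices $V^X=V\times2^\Pi$, edges $((v,I),(v',I'))\in E^X$ iff $(v,v')\in E$ and $I'=I\cup\{i:v'\in F_i\}$, $(v,I)\in V^X_i$ iff $v\in V_i$, targets $F^X_i=\{(v,I):i\in I\}$ with corresponding reachability costs $\mathrm{Cost}_i$; $x_0=(v_0,\{i:v_0\in F_i\})$. $I(u)$ is the second component of $u$. $\mathcal{I}$ is the set of $I$ such that some $(v,I)$ is reachable from $x_0$, $N=|\mathcal{I}|$, and $J_1<\dots<J_N$ is a fixed total order of $\mathcal{I}$ extending the partial order $I<I'$ iff $I\ne I'$ and some $(v',I')$ is reachable from some $(v,I)$. $V^{\ge J_n}=\{(v,J_m):v\in V,m\ge n\}$. Labelings: for $\lambda:V^X\to\mathbb{N}\cup\{+\infty\}$, a play $\rho$ of $X$ is $\lambda$-consistent if $\mathrm{Cost}_i(\rho_{\ge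 n})\le\lambda(\rho_n)$ for all $n$ and $i$ with $\rho_n\in V^X_i$. $\lambda^0(u)=0$ if $u\in V^X_i$ and $i\in I(u)$, else $+\infty$. The update of $\lambda^k$ w.r.t. $V^{\ge J_n}$ keeps values outside $V^{\ge J_n}$ and, for $u\in V^{\ge J_n}\cap V^X_i$, sets $\lambda^{k+1}(u)=0$ if $i\in I(u)$, otherwise $1+\min_{(u,u')\in E^X}\sup\{\mathrm{Cost}_i(\rho):\rho\in\Lambda^k(u')\}$ ($1+(+\infty)=+\infty$). The sequence $(\lambda^k)$ is generated by $n_0=N$, $\lambda^{k+1}=$ update of $\lambda^k$ w.r.t. $V^{\ge J_{n_k}}$, $n_{k+1}=n_k-1$ if $\lambda^{k+1}=\lambda^k$ and $n_k>1$, else $n_{k+1}=n_k$. $\Lambda^k(v)$ denotes the set of $\lambda^k$-consistent plays of $X$ starting at $v$. *)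

theory Defs
  imports Main "HOL-Library.Extended_Nat"
begin

text \<open>Arena: players Pi, vertices V, ownership function owner (encoding the partition
  (V_i)), edges E, targets F. The extended game X has vertex set V x 2^Pi.\<close>

definition VX :: "'p set \<Rightarrow> 'v set \<Rightarrow> ('v \<times> 'p set) set" where
  "VX Pi V = V \<times> Pow Pi"

definition EdgX :: "'p set \<Rightarrow> ('v \<times> 'v) set \<Rightarrow> ('p \<Rightarrow> 'v set)
    \<Rightarrow> (('v \<times> 'p set) \<times> ('v \<times> 'p set)) set" where
  "EdgX Pi E F = {((v, I), (v', I')). (v, v') \<in> E \<and> I \<subseteq> Pi \<and> I' = I \<union> {i \<in> Pi. v' \<in> F i}}"

definition x0 :: "'p set \<Rightarrow> ('p \<Rightarrow> 'v set) \<Rightarrow> 'v \<Rightarrow> 'v \<times> 'p set" where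
  "x0 Pi F v0 = (v0, {i \<in> Pi. v0 \<in> F i})"

definition xplay :: "'p set \<Rightarrow> 'v set \<Rightarrow> ('v \<times> 'v) set \<Rightarrow> ('p \<Rightarrow> 'v set)
    \<Rightarrow> (nat \<Rightarrow> 'v \<times> 'p set) \<Rightarrow> bool" where
  "xplay Pi V E F \<rho> \<longleftrightarrow> \<rho> 0 \<in> VX Pi V \<and> (\<forall>n. (\<rho> n, \<rho> (Suc n)) \<in> EdgX Pi E F)"

text \<open>Reachability cost for target F^X_i = {(v,I). i \<in> I}.\<close>
definition costX :: "'p \<Rightarrow> (nat \<Rightarrow> 'v \<times> 'p set) \<Rightarrow> enat" where
  "costX i \<rho> = (if \<exists>k. i \<in> snd (\<rho> k) then enat (LEAST k. i \<in> snd (\<rho> k)) else \<infinity>)"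

definition consistent :: "('v \<Rightarrow> 'p) \<Rightarrow> ('v \<times> 'p set \<Rightarrow> enat) \<Rightarrow> (nat \<Rightarrow> 'v \<times> 'p set) \<Rightarrow> bool" where
  "consistent owner lam \<rho> \<longleftrightarrow> (\<forall>n. costX (owner (fst (\<rho> n))) (\<lambda>m. \<rho> (n + m)) \<le> lam (\<rho> n))"

definition Lambda :: "'p set \<Rightarrow> 'v set \<Rightarrow> ('v \<times> 'v) set \<Rightarrow> ('p \<Rightarrow> 'v set) \<Rightarrow> ('v \<Rightarrow> 'p)
    \<Rightarrow> ('v \<times> 'p set \<Rightarrow> enat) \<Rightarrow> 'v \<times> 'p set \<Rightarrow> (nat \<Rightarrow> 'v \<times> 'p set) set" where
  "Lambda Pi V E F owner lam u = {\<rho>. xplay Pi V E F \<rho> \<and> \<rho> 0 = u \<and> consistent owner lam \<rho>}"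

definition lam0 :: "('v \<Rightarrow> 'p) \<Rightarrow> 'v \<times> 'p set \<Rightarrow> enat" where
  "lam0 owner u = (if owner (fst u) \<in> snd u then 0 else \<infinity>)"

definition Iset :: "'p set \<Rightarrow> ('v \<times> 'v) set \<Rightarrow> ('p \<Rightarrow> 'v set) \<Rightarrow> 'v \<Rightarrow> 'p set set" where
  "Iset Pi E F v0 = {I. \<exists>v. (x0 Pi F v0, (v, I)) \<in> (EdgX Pi E F)\<^sup>*}"

definition Iless :: "'p set \<Rightarrow> ('v \<times> 'v) set \<Rightarrow> ('p \<Rightarrow> 'v set) \<Rightarrow> 'p set \<Rightarrow> 'p set \<Rightarrow> bool" where
  "Iless Pi E F I I' \<longleftrightarrow> I \<noteq> I' \<and> (\<exists>v v'. ((v, I), (v', I')) \<in> (EdgX Pi E F)\<^sup>*)"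

definition Vge :: "'v set \<Rightarrow> (nat \<Rightarrow> 'p set) \<Rightarrow> nat \<Rightarrow> nat \<Rightarrow> ('v \<times> 'p set) set" where
  "Vge V J N n = {(v, J m) | v m. v \<in> V \<and> n \<le> m \<and> m \<le> N}"

definition update :: "'p set \<Rightarrow> 'v set \<Rightarrow> ('v \<times> 'v) set \<Rightarrow> ('p \<Rightarrow> 'v set) \<Rightarrow> ('v \<Rightarrow> 'p)
    \<Rightarrow> (nat \<Rightarrow> 'p set) \<Rightarrow> nat \<Rightarrow> ('v \<times> 'p set \<Rightarrow> enat) \<Rightarrow> nat \<Rightarrow> 'v \<times> 'p set \<Rightarrow> enat" where
  "update Pi V E F owner J N lam n u =
     (if u \<in> Vge V J N n then
        (if owner (fst u) \<in> snd u then 0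
         else 1 + (INF u' \<in> {u'. (u, u') \<in> EdgX Pi E F}.
                     Sup (costX (owner (fst u)) ` Lambda Pi V E F owner lam u')))
      else lam u)"

primrec lamseq :: "'p set \<Rightarrow> 'v set \<Rightarrow> ('v \<times> 'v) set \<Rightarrow> ('p \<Rightarrow> 'v set) \<Rightarrow> ('v \<Rightarrow> 'p)
    \<Rightarrow> (nat \<Rightarrow> 'p set) \<Rightarrow> nat \<Rightarrow> nat \<Rightarrow> ('v \<times> 'p set \<Rightarrow> enat) \<times> nat" where
  "lamseq Pi V E F owner J N 0 = (lam0 owner, N)"
| "lamseq Pi V E F owner J N (Suc k) =
     (let (l, n) = lamseq Pi V E F owner J N k;
          l' = update Pi V E F owner J N l n
      in (l', if l' = l \<and> n > 1 then n - 1 else n))"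

end

theory Submission
  imports Defs
begin

text \<open>Starting in \<open>u\<close>, being \<open>\<lambda>\<close>-consistent and avoiding \<open>F\<^sup>X\<^sub>i\<close> during the first \<open>m\<close> steps
  are all conditions on finite prefixes of a play. If \<open>Cost\<^sub>i\<close> is unbounded on \<open>\<Lambda>(u)\<close>, the
  sets of plays of \<open>\<Lambda>(u)\<close> avoiding \<open>F\<^sup>X\<^sub>i\<close> for \<open>m\<close> steps are nonempty and decrease in \<open>m\<close>; as
  plays range over the finite set \<open>V\<^sup>X\<close>, Koenig's lemma yields one play all of whose prefixes
  extend to members of these sets, and this play lies in \<open>\<Lambda>(u)\<close> and never reaches \<open>F\<^sup>X\<^sub>i\<close>.
  Nothing is used about the labeling, so the statement holds for every \<open>\<lambda>\<close>, not only the \<open>\<lambda>\<^sup>k\<close>.\<close>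

definition prefix_closure :: "(nat \<Rightarrow> 'a) set \<Rightarrow> (nat \<Rightarrow> 'a) set" where
  "prefix_closure S = {\<rho>. \<forall>n. \<exists>r\<in>S. \<forall>j\<le>n. r j = \<rho> j}"

lemma prefix_closure_mono: "S \<subseteq> T \<Longrightarrow> prefix_closure S \<subseteq> prefix_closure T"
  unfolding prefix_closure_def by blast

lemma Inter_prefix_closure_nonempty:
  fixes P :: "nat \<Rightarrow> (nat \<Rightarrow> 'a) set"
  assumes "finite A"
    and values_in_A: "\<And>m r n. r \<in> P m \<Longrightarrow> r n \<in> A"
    and decreasing: "\<And>m m'. m \<le> m' \<Longrightarrow> P m' \<subseteq> P m"
    and nonempty: "\<And>m. P m \<noteq> {}"
  shows "(\<Inter>m. prefix_closure (P m)) \<noteq> {}"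
proof -
  define extendable where "extendable n f \<longleftrightarrow> (\<forall>m. \<exists>r\<in>P m. \<forall>j<n. r j = f j)" for n f
  have extend: "\<exists>x. extendable (Suc n) (f(n := x))" if "extendable n f" for n f
  proof (rule ccontr)
    assume "\<nexists>x. extendable (Suc n) (f(n := x))"
    then have "\<forall>x. \<exists>m. \<forall>r\<in>P m. \<not> (\<forall>j<Suc n. r j = (f(n := x)) j)"
      unfolding extendable_def by blast
    then obtain bad where bad: "\<And>x r. r \<in> P (bad x) \<Longrightarrow> \<not> (\<forall>j<Suc n. r j = (f(n := x)) j)"
      by metis
    \<comment> \<open>pigeonhole: a single index \<open>M\<close> excludes every possible value at position \<open>n\<close>\<close>
    define M where "M = Max (bad ` A)"
    from \<open>extendable n f\<close> obtain r where r: "r \<in> P M" "\<forall>j<n. r j = f j"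
      unfolding extendable_def by blast
    have "bad (r n) \<le> M"
      unfolding M_def using \<open>finite A\<close> values_in_A[OF r(1)] by simp
    then have "r \<in> P (bad (r n))" using decreasing r(1) by blast
    from bad[OF this] show False using r(2) by (auto simp: less_Suc_eq)
  qed
  obtain f where f: "\<And>n. extendable n (f n)" and f_Suc: "\<And>n. \<exists>x. f (Suc n) = (f n)(n := x)"
  proof -
    have "\<exists>f. \<forall>n. extendable n (f n) \<and> (\<exists>x. f (Suc n) = (f n)(n := x))"
    proof (rule dependent_nat_choice)
      show "\<exists>f. extendable 0 f" using nonempty unfolding extendable_def by blast
    qed (use extend in blast)
    then show thesis using that by blast
  qed
  have f_stable: "f (n + d) j = f n j" if "j < n" for n d j
    using that
  proof (induction d)
    case (Suc d)
    obtain x where "f (Suc (n + d)) = (f (n + d))(n + d := x)" using f_Suc by blast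
    then show ?case using Suc by simp
  qed simp
  define \<rho> where "\<rho> n = f (Suc n) n" for n
  have "\<rho> \<in> prefix_closure (P m)" for m
    unfolding prefix_closure_def
  proof (intro CollectI allI)
    fix n
    obtain r where "r \<in> P m" "\<forall>j<Suc n. r j = f (Suc n) j"
      using f unfolding extendable_def by blast
    moreover have "f (Suc n) j = \<rho> j" if "j \<le> n" for j
      using f_stable[of j "Suc j" "n - j"] that unfolding \<rho>_def by simp
    ultimately show "\<exists>r\<in>P m. \<forall>j\<le>n. r j = \<rho> j" by (metis less_Suc_eq_le)
  qed
  then show ?thesis by auto
qed

lemma costX_le_enat_iff: "costX i \<rho> \<le> enat c \<longleftrightarrow> (\<exists>k\<le>c. i \<in> snd (\<rho> k))"
proof (cases "\<exists>k. i \<in> snd (\<rho> k)")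
  case True
  then have "i \<in> snd (\<rho> (LEAST k. i \<in> snd (\<rho> k)))" by (rule LeastI_ex)
  with True show ?thesis
    unfolding costX_def by (auto intro: Least_le order.trans)
qed (simp add: costX_def)

lemma costX_eq_infinity_iff: "costX i \<rho> = \<infinity> \<longleftrightarrow> (\<forall>k. i \<notin> snd (\<rho> k))"
  unfolding costX_def by simp

lemma xplay_in_VX:
  assumes "E \<subseteq> V \<times> V" and "xplay Pi V E F \<rho>"
  shows "\<rho> n \<in> VX Pi V"
proof (cases n)
  case (Suc m)
  then have "(\<rho> m, \<rho> n) \<in> EdgX Pi E F" using assms(2) unfolding xplay_def by simp
  then show ?thesis using assms(1) unfolding EdgX_def VX_def by auto
qed (use assms(2) in \<open>simp add: xplay_def\<close>)

lemma Lambda_prefix_closed: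
  "prefix_closure (Lambda Pi V E F owner lam u) \<subseteq> Lambda Pi V E F owner lam u"
proof
  fix \<rho> assume "\<rho> \<in> prefix_closure (Lambda Pi V E F owner lam u)"
  then have prefix: "\<exists>r. xplay Pi V E F r \<and> r 0 = u \<and> consistent owner lam r \<and> (\<forall>j\<le>n. r j = \<rho> j)"
    for n unfolding prefix_closure_def Lambda_def by blast
  have "xplay Pi V E F \<rho>"
    unfolding xplay_def
  proof (intro conjI allI)
    show "\<rho> 0 \<in> VX Pi V" using prefix[of 0] unfolding xplay_def by auto
    fix n
    show "(\<rho> n, \<rho> (Suc n)) \<in> EdgX Pi E F"
      using prefix[of "Suc n"] unfolding xplay_def by (metis le_Suc_eq order_refl)
  qed
  moreover have "\<rho> 0 = u" using prefix[of 0] by auto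
  moreover have "consistent owner lam \<rho>"
    unfolding consistent_def
  proof
    fix n
    show "costX (owner (fst (\<rho> n))) (\<lambda>m. \<rho> (n + m)) \<le> lam (\<rho> n)"
    proof (cases "lam (\<rho> n)")
      case (enat c)
      \<comment> \<open>the bound \<open>c\<close> only concerns the first \<open>n + c\<close> positions\<close>
      obtain r where r: "consistent owner lam r" "\<forall>j\<le>n + c. r j = \<rho> j"
        using prefix[of "n + c"] by blast
      then have "costX (owner (fst (\<rho> n))) (\<lambda>m. r (n + m)) \<le> enat c"
        using enat unfolding consistent_def by (metis le_add1)
      with r(2) show ?thesis
        unfolding enat costX_le_enat_iff by auto
    qed simp
  qed
  ultimately show "\<rho> \<in> Lambda Pi V E F owner lam u" unfolding Lambda_def by blast
qed

lemma Sup_costX_infinity_attained: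
  assumes "finite Pi" and "finite V" and "E \<subseteq> V \<times> V"
    and "Sup (costX i ` Lambda Pi V E F owner lam u) = \<infinity>"
  shows "\<exists>\<rho> \<in> Lambda Pi V E F owner lam u. costX i \<rho> = \<infinity>"
proof -
  define P where "P m = {\<rho> \<in> Lambda Pi V E F owner lam u. \<forall>k\<le>m. i \<notin> snd (\<rho> k)}" for m
  have P_nonempty: "P m \<noteq> {}" for m
  proof -
    have "enat m < Sup (costX i ` Lambda Pi V E F owner lam u)" using assms(4) by simp
    then obtain r where "r \<in> Lambda Pi V E F owner lam u" "\<not> costX i r \<le> enat m"
      by (auto simp: less_Sup_iff not_le)
    then show ?thesis unfolding P_def costX_le_enat_iff by blast
  qed
  have P_decreasing: "P m' \<subseteq> P m" if "m \<le> m'" for m m'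
    using that unfolding P_def by auto
  have P_in_VX: "r n \<in> VX Pi V" if "r \<in> P m" for r m n
    using that xplay_in_VX[OF assms(3)] unfolding P_def Lambda_def by blast
  have "finite (VX Pi V)" unfolding VX_def using assms(1,2) by simp
  then have "(\<Inter>m. prefix_closure (P m)) \<noteq> {}"
    using P_in_VX P_decreasing P_nonempty by (rule Inter_prefix_closure_nonempty)
  then obtain \<rho> where \<rho>: "\<And>m. \<rho> \<in> prefix_closure (P m)" by auto
  have "P 0 \<subseteq> Lambda Pi V E F owner lam u" unfolding P_def by blast
  then have "prefix_closure (P 0) \<subseteq> Lambda Pi V E F owner lam u"
    by (rule order.trans[OF prefix_closure_mono Lambda_prefix_closed])
  then have "\<rho> \<in> Lambda Pi V E F owner lam u" using \<rho> by blast
  moreover have "i \<notin> snd (\<rho> k)" for k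
  proof -
    obtain r where "r \<in> P k" "r k = \<rho> k"
      using \<rho>[of k] unfolding prefix_closure_def by blast
    then show ?thesis unfolding P_def by auto
  qed
  ultimately show ?thesis unfolding costX_eq_infinity_iff by blast
qed

theorem proposition2p11:
  fixes Pi :: "'p set" and V :: "'v set" and owner :: "'v \<Rightarrow> 'p"
    and E :: "('v \<times> 'v) set" and F :: "'p \<Rightarrow> 'v set" and v0 :: 'v
    and J :: "nat \<Rightarrow> 'p set"
  assumes "finite Pi" and "finite V" and "card V \<ge> 2" and "card Pi \<le> card V"
    and "\<forall>v\<in>V. owner v \<in> Pi"
    and "E \<subseteq> V \<times> V" and "\<forall>v\<in>V. \<exists>v'. (v, v') \<in> E"
    and "\<forall>i\<in>Pi. F i \<subseteq> V"
    and "v0 \<in> V"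
    and "bij_betw J {1..card (Iset Pi E F v0)} (Iset Pi E F v0)"
    and "\<forall>m\<in>{1..card (Iset Pi E F v0)}. \<forall>n\<in>{1..card (Iset Pi E F v0)}.
           Iless Pi E F (J m) (J n) \<longrightarrow> m < n"
  shows "\<forall>k u i. u \<in> VX Pi V \<and> i \<in> Pi \<and>
      Sup (costX i ` Lambda Pi V E F owner (fst (lamseq Pi V E F owner J (card (Iset Pi E F v0)) k)) u) = \<infinity>
      \<longrightarrow> (\<exists>\<rho> \<in> Lambda Pi V E F owner (fst (lamseq Pi V E F owner J (card (Iset Pi E F v0)) k)) u.
             costX i \<rho> = \<infinity>)"
  using Sup_costX_infinity_attained[OF assms(1,2,6)] by blast

end
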